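(* Let $n\ge4$ and let $\mathcal D_n$ be a minimal DFA with state set $Q_n=\{0,\dots,n-1\}$, initial state $0$ and unique final state $n-1$, recognizing a two-sided ideal, with transition semigroup $T_n$. If every chain of states of $\mathcal D_n$ strictly ordered by $\prec$ has at most $3$ elements (i.e., a maximal-length such chain has length $3$), then $|T_n|\le n^{n-2}+(n-2)2^{n-2}+1$ and $T_n$ is a subsemigroup of $S_n$.
   Context: A two-sided ideal is a nonempty $L$ with $L=\Sigma^*L\Sigma^*$. For a state $q$, $K_q$ is the language accepted from $q$; $p\prec q$ means $K_p\subsetneq K_q$. The transition semigroup is the set of state transformations induced by nonempty words. Notation: $(p\to q)$ maps $p$ to $q$ and fixes other states; $(p_0,\dots,p_{k-1})$ is a cyclic permutation fixing other states. $S_n$ is the transition semigroup of the DFA with states $Q_n$, initial $0$, final $\{n-1\}$, alphabet $\{a,b,c,d,e,f\}$, with $a\colon(1,2,\dots,n-2)$, $b\colon(1,2)$, $c\colon(n-2\to1)$, $d\colon(n-2\to0)$, $e$ mapping each state of $\{0,\dots,n-2\}$ to $1$ and fixing $n-1$, and $f\colon(1\to n-1)$. *)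

theory Defs
  imports Main
begin

text \<open>A DFA with state set Q_n = {0..<n}, alphabet Sigma, transition function delta.
  Initial state 0, unique final state n-1.\<close>

fun dstar :: "(nat \<Rightarrow> 'a \<Rightarrow> nat) \<Rightarrow> nat \<Rightarrow> 'a list \<Rightarrow> nat" where
  "dstar \<delta> q [] = q"
| "dstar \<delta> q (x # w) = dstar \<delta> (\<delta> q x) w"

definition is_dfa :: "nat \<Rightarrow> 'a set \<Rightarrow> (nat \<Rightarrow> 'a \<Rightarrow> nat) \<Rightarrow> bool" where
  "is_dfa n \<Sigma> \<delta> \<longleftrightarrow> finite \<Sigma> \<and> 0 < n \<and> (\<forall>q<n. \<forall>x\<in>\<Sigma>. \<delta> q x < n)"

definition lang_from :: "nat \<Rightarrow> 'a set \<Rightarrow> (nat \<Rightarrow> 'a \<Rightarrow> nat) \<Rightarrow> nat \<Rightarrow> 'a list set" where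
  "lang_from n \<Sigma> \<delta> q = {w. set w \<subseteq> \<Sigma> \<and> dstar \<delta> q w = n - 1}"

definition minimal_dfa :: "nat \<Rightarrow> 'a set \<Rightarrow> (nat \<Rightarrow> 'a \<Rightarrow> nat) \<Rightarrow> bool" where
  "minimal_dfa n \<Sigma> \<delta> \<longleftrightarrow>
     (\<forall>q<n. \<exists>w. set w \<subseteq> \<Sigma> \<and> dstar \<delta> 0 w = q) \<and>
     (\<forall>p<n. \<forall>q<n. p \<noteq> q \<longrightarrow> lang_from n \<Sigma> \<delta> p \<noteq> lang_from n \<Sigma> \<delta> q)"

definition two_sided_ideal :: "'a set \<Rightarrow> 'a list set \<Rightarrow> bool" where
  "two_sided_ideal \<Sigma> L \<longleftrightarrow> L \<noteq> {} \<and>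
     L = {u @ v @ w | u v w. set u \<subseteq> \<Sigma> \<and> v \<in> L \<and> set w \<subseteq> \<Sigma>}"

definition state_prec :: "nat \<Rightarrow> 'a set \<Rightarrow> (nat \<Rightarrow> 'a \<Rightarrow> nat) \<Rightarrow> nat \<Rightarrow> nat \<Rightarrow> bool" where
  "state_prec n \<Sigma> \<delta> p q \<longleftrightarrow> lang_from n \<Sigma> \<delta> p \<subset> lang_from n \<Sigma> \<delta> q"

text \<open>Transformation of Q_n induced by a word (identity outside Q_n, as a normal form).\<close>
definition word_trans :: "nat \<Rightarrow> (nat \<Rightarrow> 'a \<Rightarrow> nat) \<Rightarrow> 'a list \<Rightarrow> nat \<Rightarrow> nat" where
  "word_trans n \<delta> w = (\<lambda>q. if q < n then dstar \<delta> q w else q)"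

definition trans_semigroup :: "nat \<Rightarrow> 'a set \<Rightarrow> (nat \<Rightarrow> 'a \<Rightarrow> nat) \<Rightarrow> (nat \<Rightarrow> nat) set" where
  "trans_semigroup n \<Sigma> \<delta> = {word_trans n \<delta> w | w. w \<noteq> [] \<and> set w \<subseteq> \<Sigma>}"

text \<open>The DFA defining S_n; letters a,b,c,d,e,f are encoded as 0,...,5.\<close>
definition delta_S :: "nat \<Rightarrow> nat \<Rightarrow> nat \<Rightarrow> nat" where
  "delta_S n q x =
    (if x = 0 then (if 1 \<le> q \<and> q < n - 2 then q + 1 else if q = n - 2 then 1 else q)
     else if x = 1 then (if q = 1 then 2 else if q = 2 then 1 else q)
     else if x = 2 then (if q = n - 2 then 1 else q)
     else if x = 3 then (if q = n - 2 then 0 else q)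
     else if x = 4 then (if q \<le> n - 2 then 1 else q)
     else (if q = 1 then n - 1 else q))"

definition S_sem :: "nat \<Rightarrow> (nat \<Rightarrow> nat) set" where
  "S_sem n = trans_semigroup n {0..<6} (delta_S n)"

end

theory Submission
  imports Defs "HOL-Library.FuncSet" "HOL-Combinatorics.Permutations"
begin

text \<open>In a minimal DFA recognising a two-sided ideal, \<open>K\<^sub>0 \<subseteq> K\<^sub>q \<subseteq> K\<^sub>n\<^sub>-\<^sub>1 = \<Sigma>\<^sup>*\<close> for every state
  \<open>q\<close>, so \<open>n - 1\<close> is a sink, and the chain bound forces the middle states \<open>1, \<dots>, n - 2\<close> to be
  pairwise incomparable. A transformation \<open>t\<close> induced by a word preserves inclusion between the
  languages \<open>K\<^sub>q\<close>; hence either \<open>t 0 = 0\<close>, or every middle state is sent to \<open>t 0\<close> or to \<open>n - 1\<close>.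
  Counting these maps according to the value \<open>t 0\<close> gives \<open>n\<^sup>n\<^sup>-\<^sup>2 + (n - 2) 2\<^sup>n\<^sup>-\<^sup>2 + 1\<close>.
  Conversely, every such map lies in \<open>S\<^sub>n\<close>: \<open>a\<close> and \<open>b\<close> generate all permutations of the middle
  states, conjugating \<open>c\<close>, \<open>d\<close>, \<open>f\<close> by them yields every \<open>(i \<rightarrow> j)\<close>, these generate all maps fixing
  \<open>0\<close> by induction on the defect, and a map with \<open>t 0 \<noteq> 0\<close> factors through \<open>e\<close>.\<close>

section \<open>Minimal DFAs recognising two-sided ideals\<close>

lemma dstar_append: "dstar \<delta> q (u @ v) = dstar \<delta> (dstar \<delta> q u) v"
  by (induction u arbitrary: q) auto

lemma dstar_less:
  assumes "is_dfa n \<Sigma> \<delta>" "set w \<subseteq> \<Sigma>" "q < n"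
  shows "dstar \<delta> q w < n"
  using assms(2,3) by (induction w arbitrary: q) (use assms(1) in \<open>auto simp: is_dfa_def\<close>)

lemma word_trans_append:
  assumes "is_dfa n \<Sigma> \<delta>" "set u \<subseteq> \<Sigma>"
  shows "word_trans n \<delta> (u @ v) = word_trans n \<delta> v \<circ> word_trans n \<delta> u"
  using dstar_less[OF assms] by (auto simp: fun_eq_iff word_trans_def dstar_append)

lemma lang_from_dstar:
  assumes "set w \<subseteq> \<Sigma>"
  shows "lang_from n \<Sigma> \<delta> (dstar \<delta> q w) = {v. set v \<subseteq> \<Sigma> \<and> w @ v \<in> lang_from n \<Sigma> \<delta> q}"
  using assms by (auto simp: lang_from_def dstar_append)

locale ideal_dfa =
  fixes n :: nat and \<Sigma> :: "'a set" and \<delta> :: "nat \<Rightarrow> 'a \<Rightarrow> nat"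
  assumes dfa: "is_dfa n \<Sigma> \<delta>"
    and minimal: "minimal_dfa n \<Sigma> \<delta>"
    and ideal: "two_sided_ideal \<Sigma> (lang_from n \<Sigma> \<delta> 0)"
begin

abbreviation K :: "nat \<Rightarrow> 'a list set" where
  "K \<equiv> lang_from n \<Sigma> \<delta>"

lemma reachable: "q < n \<Longrightarrow> \<exists>u. set u \<subseteq> \<Sigma> \<and> dstar \<delta> 0 u = q"
  using minimal by (simp add: minimal_dfa_def)

lemma K_inj: "p < n \<Longrightarrow> q < n \<Longrightarrow> K p = K q \<Longrightarrow> p = q"
  using minimal unfolding minimal_dfa_def by blast

lemma ideal_append:
  assumes "v \<in> K 0" "set u \<subseteq> \<Sigma>" "set w \<subseteq> \<Sigma>"
  shows "u @ v @ w \<in> K 0"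
proof -
  have "u @ v @ w \<in> {u @ v @ w | u v w. set u \<subseteq> \<Sigma> \<and> v \<in> K 0 \<and> set w \<subseteq> \<Sigma>}"
    using assms by blast
  with ideal show ?thesis
    unfolding two_sided_ideal_def by (elim conjE) (erule ssubst)
qed

lemma K_0_subset: "q < n \<Longrightarrow> K 0 \<subseteq> K q"
proof
  fix v assume "q < n" "v \<in> K 0"
  obtain u where "set u \<subseteq> \<Sigma>" "dstar \<delta> 0 u = q"
    using reachable \<open>q < n\<close> by blast
  moreover have "u @ v @ [] \<in> K 0"
    using ideal_append[of v u "[]"] \<open>v \<in> K 0\<close> calculation(1) by simp
  ultimately show "v \<in> K q" by (simp add: lang_from_def dstar_append)
qed

lemma K_last: "K (n - 1) = {v. set v \<subseteq> \<Sigma>}"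
proof -
  obtain u where "set u \<subseteq> \<Sigma>" "dstar \<delta> 0 u = n - 1"
    using reachable[of "n - 1"] dfa by (auto simp: is_dfa_def)
  then have "\<And>v. set v \<subseteq> \<Sigma> \<Longrightarrow> [] @ u @ v \<in> K 0"
    by (intro ideal_append) (simp_all add: lang_from_def)
  with \<open>dstar \<delta> 0 u = n - 1\<close> show ?thesis
    by (auto simp: lang_from_def dstar_append)
qed

lemma K_subset_last: "K q \<subseteq> K (n - 1)"
  unfolding K_last by (auto simp: lang_from_def)

lemma dstar_last:
  assumes "set w \<subseteq> \<Sigma>"
  shows "dstar \<delta> (n - 1) w = n - 1"
proof -
  have "w \<in> K (n - 1)"
    unfolding K_last using assms by simp
  then show ?thesis
    by (simp add: lang_from_def)
qed

end

section \<open>Transformations of an ideal DFA with short chains\<close>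

text \<open>The maps that fix the sink \<open>n - 1\<close> and preserve inclusion between the \<open>K\<^sub>q\<close> when
  \<open>K\<^sub>0 \<subseteq> K\<^sub>q \<subseteq> K\<^sub>n\<^sub>-\<^sub>1\<close> for all \<open>q\<close> and the middle states are pairwise incomparable.\<close>

definition ideal_trans :: "nat \<Rightarrow> (nat \<Rightarrow> nat) set" where
  "ideal_trans n = {t. (\<forall>q. n - 1 \<le> q \<longrightarrow> t q = q) \<and> t 0 < n \<and> (\<forall>q\<in>{1..n-2}. t q < n) \<and>
     (t 0 = 0 \<or> (\<forall>q\<in>{1..n-2}. t q \<in> {t 0, n - 1}))}"

locale ideal_dfa_short_chains = ideal_dfa +
  assumes short_chains:
    "\<forall>xs. set xs \<subseteq> {0..<n} \<and> sorted_wrt (state_prec n \<Sigma> \<delta>) xs \<longrightarrow> length xs \<le> 3"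
begin

lemma middle_incomparable:
  assumes "p \<in> {1..n-2}" "q \<in> {1..n-2}" "p \<noteq> q"
  shows "\<not> K p \<subseteq> K q"
proof
  assume "K p \<subseteq> K q"
  have prec: "state_prec n \<Sigma> \<delta> a b" if "a < n" "b < n" "a \<noteq> b" "K a \<subseteq> K b" for a b
    using that K_inj unfolding state_prec_def by blast
  have "p < n" "q < n" "0 < n" "p \<noteq> n - 1" "q \<noteq> n - 1"
    using assms by auto
  then have "sorted_wrt (state_prec n \<Sigma> \<delta>) [0, p, q, n - 1]"
    using assms \<open>K p \<subseteq> K q\<close> by (simp add: prec K_0_subset K_subset_last del: One_nat_def)
  moreover have "set [0, p, q, n - 1] \<subseteq> {0..<n}"
    using \<open>p < n\<close> \<open>q < n\<close> by auto
  ultimately show False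
    using short_chains[rule_format, of "[0, p, q, n - 1]"] by simp
qed

lemma K_subset_cases:
  assumes "p < n" "q < n" "p \<noteq> 0" "K p \<subseteq> K q"
  shows "q = p \<or> q = n - 1"
proof (rule ccontr)
  assume contra: "\<not> (q = p \<or> q = n - 1)"
  have "q \<noteq> 0"
  proof
    assume "q = 0"
    then have "K p = K 0"
      using assms(4) K_0_subset[OF assms(1)] by (simp add: subset_antisym)
    then show False
      using K_inj[of p 0] assms by simp
  qed
  moreover have "p \<noteq> n - 1"
  proof
    assume "p = n - 1"
    then have "K q = K (n - 1)"
      using assms(4) K_subset_last[of q] by (simp add: subset_antisym)
    then show False
      using K_inj[of q "n - 1"] assms contra by simp
  qed
  ultimately have "p \<in> {1..n-2}" "q \<in> {1..n-2}" "p \<noteq> q"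
    using assms contra by auto
  then show False
    using assms(4) middle_incomparable by blast
qed

lemma trans_semigroup_subset_ideal_trans: "trans_semigroup n \<Sigma> \<delta> \<subseteq> ideal_trans n"
proof
  fix t assume "t \<in> trans_semigroup n \<Sigma> \<delta>"
  then obtain w where t: "t = word_trans n \<delta> w" and w: "set w \<subseteq> \<Sigma>"
    unfolding trans_semigroup_def by blast
  have less: "t q < n" if "q < n" for q
    using that dstar_less[OF dfa w] by (simp add: t word_trans_def)
  have n: "0 < n"
    using dfa by (simp add: is_dfa_def)
  have "K (t 0) \<subseteq> K (t q)" if "q < n" for q
    using that n K_0_subset[of q] by (auto simp: t word_trans_def lang_from_dstar[OF w])
  then have "t q \<in> {t 0, n - 1}" if "t 0 \<noteq> 0" "q < n" for q
    using that n less K_subset_cases[of "t 0" "t q"] by blast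
  moreover have middle_less: "q < n" if "q \<in> {1..n-2}" for q
    using that by auto
  ultimately have "t 0 = 0 \<or> (\<forall>q\<in>{1..n-2}. t q \<in> {t 0, n - 1})"
    by blast
  moreover have "t q = q" if "n - 1 \<le> q" for q
    using that dstar_last[OF w] by (cases "q = n - 1") (auto simp: t word_trans_def)
  ultimately show "t \<in> ideal_trans n"
    using less n middle_less unfolding ideal_trans_def by simp
qed

end

section \<open>Counting\<close>

lemma card_le_power_if_agree_outside:
  assumes "finite A" "finite B"
    and maps: "\<And>f x. f \<in> F \<Longrightarrow> x \<in> A \<Longrightarrow> f x \<in> B"
    and agree: "\<And>f g x. f \<in> F \<Longrightarrow> g \<in> F \<Longrightarrow> x \<notin> A \<Longrightarrow> f x = g x"
  shows "finite F" and "card F \<le> card B ^ card A"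
proof -
  have inj: "inj_on (\<lambda>f. restrict f A) F"
  proof (rule inj_onI)
    fix f g assume "f \<in> F" "g \<in> F" "restrict f A = restrict g A"
    then show "f = g"
      using agree by (metis ext restrict_apply')
  qed
  have sub: "(\<lambda>f. restrict f A) ` F \<subseteq> (\<Pi>\<^sub>E x\<in>A. B)"
    using maps by auto
  have fin: "finite (\<Pi>\<^sub>E x\<in>A. B)"
    using assms(1,2) by (simp add: finite_PiE)
  show "finite F"
    using finite_imageD[OF finite_subset[OF sub fin] inj] .
  have "card F \<le> card (\<Pi>\<^sub>E x\<in>A. B)"
    using card_inj_on_le[OF inj sub fin] .
  also have "\<dots> = card B ^ card A"
    using assms(1) by (simp add: card_PiE)
  finally show "card F \<le> card B ^ card A" .
qed

lemma ideal_trans_fibre: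
  assumes "c < n"
  shows "finite {t \<in> ideal_trans n. t 0 = c}"
    and "card {t \<in> ideal_trans n. t 0 = c} \<le> (if c = 0 then n else card {c, n - 1}) ^ (n - 2)"
proof -
  let ?F = "{t \<in> ideal_trans n. t 0 = c}"
  let ?B = "if c = 0 then {0..<n} else {c, n - 1}"
  have maps: "t q \<in> ?B" if "t \<in> ?F" "q \<in> {1..n-2}" for t q
    using that by (auto simp: ideal_trans_def)
  have agree: "t x = s x" if "t \<in> ?F" "s \<in> ?F" "x \<notin> {1..n-2}" for t s x
    using that by (cases "x = 0") (auto simp: ideal_trans_def)
  show "finite ?F"
    by (rule card_le_power_if_agree_outside(1)[of "{1..n-2}" ?B]; (rule maps agree)?; simp)
  have "card ?F \<le> card ?B ^ card {1..n-2}"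
    by (rule card_le_power_if_agree_outside(2); (rule maps agree)?; simp)
  then show "card ?F \<le> (if c = 0 then n else card {c, n - 1}) ^ (n - 2)"
    by (simp split: if_splits)
qed

lemma card_ideal_trans:
  assumes "2 \<le> n"
  shows "finite (ideal_trans n)"
    and "card (ideal_trans n) \<le> n ^ (n - 2) + (n - 2) * 2 ^ (n - 2) + 1"
proof -
  let ?F = "\<lambda>c. {t \<in> ideal_trans n. t 0 = c}"
  have cover: "ideal_trans n = (\<Union>c<n. ?F c)"
  proof (intro equalityI subsetI)
    fix t assume "t \<in> ideal_trans n"
    moreover from this have "t 0 < n"
      by (simp add: ideal_trans_def)
    ultimately show "t \<in> (\<Union>c<n. ?F c)"
      by (intro UN_I[of "t 0"]) simp_all
  qed auto
  show "finite (ideal_trans n)"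
    by (subst cover) (simp add: ideal_trans_fibre(1))
  have "card (ideal_trans n) \<le> (\<Sum>c<n. card (?F c))"
    by (subst cover) (rule card_UN_le, simp)
  also have "\<dots> \<le> (\<Sum>c<n. (if c = 0 then n else card {c, n - 1}) ^ (n - 2))"
    by (intro sum_mono ideal_trans_fibre(2)) simp
  also have "\<dots> = n ^ (n - 2) + (n - 2) * 2 ^ (n - 2) + 1"
  proof -
    obtain m where m: "n = Suc (Suc m)"
      using assms by (metis add_2_eq_Suc le_Suc_ex)
    define f where "f c = (if c = 0 then n else card {c, n - 1}) ^ (n - 2)" for c
    have "(\<Sum>c<n. f c) = (\<Sum>c<Suc m. f c) + f (Suc m)"
      by (simp add: m)
    also have "(\<Sum>c<Suc m. f c) = f 0 + (\<Sum>i<m. f (Suc i))"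
      by (rule sum.lessThan_Suc_shift)
    also have "(\<Sum>i<m. f (Suc i)) = (\<Sum>i<m. 2 ^ m)"
      by (rule sum.cong) (simp_all add: f_def m numeral_2_eq_2)
    finally show ?thesis
      by (simp add: f_def m)
  qed
  finally show "card (ideal_trans n) \<le> n ^ (n - 2) + (n - 2) * 2 ^ (n - 2) + 1" .
qed

section \<open>Generating inside \<open>S\<^sub>n\<close>\<close>

definition defect :: "'a set \<Rightarrow> ('a \<Rightarrow> 'a) \<Rightarrow> nat" where
  "defect A f = card (A - f ` A)"

lemma defect_0_imp_permutes:
  assumes "finite A" "defect A f = 0" "\<And>x. x \<notin> A \<Longrightarrow> f x = x"
  shows "f permutes A"
proof -
  have "A \<subseteq> f ` A"
    using assms(1,2) by (simp add: defect_def)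
  moreover have "card (f ` A) \<le> card A"
    by (rule card_image_le) (rule assms(1))
  ultimately have "f ` A = A"
    using assms(1) by (metis card_seteq finite_imageI)
  then show ?thesis
    using assms(1,3) \<open>A \<subseteq> f ` A\<close> by (intro inj_imp_permutes finite_surj_inj) auto
qed

lemma defect_fun_upd_less:
  assumes "finite A" "y \<in> A - f ` A"
  shows "\<exists>i\<in>A. defect A (f(i := y)) < defect A f"
proof -
  obtain i where i: "i \<in> A" and hit: "f i \<notin> A \<or> (\<exists>j\<in>A. j \<noteq> i \<and> f j = f i)"
  proof (rule ccontr)
    assume "\<not> thesis"
    with that have "f ` A \<subseteq> A" "inj_on f A"
      by (auto simp: inj_on_def)
    then show False
      using assms endo_inj_surj by blast
  qed
  have "A - (f(i := y)) ` A \<subseteq> (A - f ` A) - {y}"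
  proof
    fix z assume z: "z \<in> A - (f(i := y)) ` A"
    have "z \<noteq> y"
      using z i by auto
    moreover have "f x \<noteq> z" if "x \<in> A" for x
      using hit z that i by (cases "x = i") (fastforce simp: image_iff)+
    ultimately show "z \<in> (A - f ` A) - {y}"
      using z by auto
  qed
  then have "defect A (f(i := y)) \<le> card ((A - f ` A) - {y})"
    unfolding defect_def by (rule card_mono[rotated]) (simp add: assms(1))
  also have "\<dots> < defect A f"
    unfolding defect_def using assms by (intro card_Diff1_less) auto
  finally show ?thesis
    using i by blast
qed

text \<open>\<open>rotation m k\<close> is the \<open>k\<close>-th power of the cycle \<open>(1, 2, \<dots>, m)\<close>; the letter \<open>a\<close> of \<open>S\<^sub>n\<close> is
  \<open>rotation (n - 2) 1\<close>.\<close>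

definition rotation :: "nat \<Rightarrow> nat \<Rightarrow> nat \<Rightarrow> nat" where
  "rotation m k x = (if 1 \<le> x \<and> x \<le> m then (x - 1 + k) mod m + 1 else x)"

lemma rotation_0: "rotation m 0 = id"
  by (auto simp: fun_eq_iff rotation_def)

lemma rotation_self: "rotation m m = id"
proof
  fix x
  have "(x - 1 + m) mod m = x - 1" if "1 \<le> x" "x \<le> m"
    using that by (metis mod_add_self2 mod_less diff_less less_le_trans zero_less_one)
  then show "rotation m m x = id x"
    by (simp add: rotation_def)
qed

lemma rotation_comp: "rotation m k \<circ> rotation m l = rotation m (k + l)"
proof
  fix x
  show "(rotation m k \<circ> rotation m l) x = rotation m (k + l) x"
  proof (cases "1 \<le> x \<and> x \<le> m")
    case True
    then obtain y where "x = Suc y" "y < m"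
      by (cases x) auto
    then show ?thesis
      by (simp add: rotation_def mod_add_right_eq ac_simps Suc_leI)
  next
    case False
    then have "rotation m l x = x" "rotation m k x = x" "rotation m (k + l) x = x"
      by (auto simp: rotation_def)
    then show ?thesis
      by simp
  qed
qed

lemma comp_transpose_comp_inverse:
  assumes "q \<circ> p = id" "p \<circ> q = id"
  shows "p \<circ> transpose a b \<circ> q = transpose (p a) (p b)"
  using assms by (auto simp: fun_eq_iff transpose_def)

lemma comp_upd_comp_inverse:
  assumes "q \<circ> p = id" "p \<circ> q = id"
  shows "p \<circ> id(a := b) \<circ> q = id(p a := p b)"
  using assms by (auto simp: fun_eq_iff)

lemma is_dfa_delta_S: "3 \<le> n \<Longrightarrow> is_dfa n {0..<6} (delta_S n)"
  by (auto simp: is_dfa_def delta_S_def)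

context
  fixes n :: nat
  assumes n: "4 \<le> n"
begin

lemma S_sem_comp:
  assumes "f \<in> S_sem n" "g \<in> S_sem n"
  shows "g \<circ> f \<in> S_sem n"
proof -
  obtain u v where "f = word_trans n (delta_S n) u" "u \<noteq> []" "set u \<subseteq> {0..<6}"
    and "g = word_trans n (delta_S n) v" "set v \<subseteq> {0..<6}"
    using assms by (auto simp: S_sem_def trans_semigroup_def)
  moreover from this have "g \<circ> f = word_trans n (delta_S n) (u @ v)"
    using word_trans_append[OF is_dfa_delta_S] n by simp
  ultimately show ?thesis
    unfolding S_sem_def trans_semigroup_def by (intro CollectI exI[of _ "u @ v"]) auto
qed

lemma word_in_S_sem:
  "w \<noteq> [] \<Longrightarrow> set w \<subseteq> {0..<6} \<Longrightarrow> word_trans n (delta_S n) w = f \<Longrightarrow> f \<in> S_sem n"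
  by (auto simp: S_sem_def trans_semigroup_def)

lemma id_in_S_sem: "id \<in> S_sem n"
  using n by (intro word_in_S_sem[of "[1, 1]"]) (auto simp: fun_eq_iff word_trans_def delta_S_def)

lemma letter_a_in_S_sem: "rotation (n - 2) 1 \<in> S_sem n"
  using n by (intro word_in_S_sem[of "[0]"]) (auto simp: fun_eq_iff word_trans_def delta_S_def rotation_def)

lemma letter_b_in_S_sem: "transpose 1 2 \<in> S_sem n"
  using n by (intro word_in_S_sem[of "[1]"]) (auto simp: fun_eq_iff word_trans_def delta_S_def transpose_def)

lemma letter_c_in_S_sem: "id(n - 2 := 1) \<in> S_sem n"
  using n by (intro word_in_S_sem[of "[2]"]) (auto simp: fun_eq_iff word_trans_def delta_S_def)

lemma letter_d_in_S_sem: "id(n - 2 := 0) \<in> S_sem n"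
  using n by (intro word_in_S_sem[of "[3]"]) (auto simp: fun_eq_iff word_trans_def delta_S_def)

lemma letter_e_in_S_sem: "(\<lambda>q. if q \<le> n - 2 then 1 else q) \<in> S_sem n"
  using n by (intro word_in_S_sem[of "[4]"]) (auto simp: fun_eq_iff word_trans_def delta_S_def)

lemma letter_f_in_S_sem: "id(1 := n - 1) \<in> S_sem n"
  using n by (intro word_in_S_sem[of "[5]"]) (auto simp: fun_eq_iff word_trans_def delta_S_def)

lemma rotation_in_S_sem: "rotation (n - 2) k \<in> S_sem n"
proof (induction k)
  case 0
  show ?case
    unfolding rotation_0 by (rule id_in_S_sem)
next
  case (Suc k)
  have "rotation (n - 2) (Suc k) = rotation (n - 2) 1 \<circ> rotation (n - 2) k"
    by (simp add: rotation_comp)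
  then show ?case
    using S_sem_comp[OF Suc.IH letter_a_in_S_sem] by (simp only:)
qed

lemma transpose_Suc_in_S_sem:
  assumes "1 \<le> i" "i < n - 2"
  shows "transpose i (Suc i) \<in> S_sem n"
proof -
  define m where "m = n - 2"
  let ?p = "rotation m (i - 1)" and ?q = "rotation m (m - (i - 1))"
  have i: "i - 1 < m" "i < m"
    using assms by (simp_all add: m_def)
  then have "?q \<circ> ?p = rotation m m" "?p \<circ> ?q = rotation m m"
    by (simp_all add: rotation_comp)
  then have "?q \<circ> ?p = id" "?p \<circ> ?q = id"
    by (simp_all only: rotation_self)
  then have "?p \<circ> transpose 1 2 \<circ> ?q = transpose (?p 1) (?p 2)"
    by (rule comp_transpose_comp_inverse)
  moreover have "?p 1 = i" "?p 2 = Suc i"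
    using assms i by (simp_all add: rotation_def)
  ultimately have "?p \<circ> transpose 1 2 \<circ> ?q = transpose i (Suc i)"
    by simp
  then show ?thesis
    using S_sem_comp rotation_in_S_sem letter_b_in_S_sem unfolding m_def by metis
qed

lemma transpose_in_S_sem:
  assumes "i \<in> {1..n-2}" "j \<in> {1..n-2}"
  shows "transpose i j \<in> S_sem n"
proof -
  have "transpose i j \<in> S_sem n" if "i \<in> {1..n-2}" "j \<le> n - 2" "i \<le> j" for i j
    using that(3,2)
  proof (induction j rule: dec_induct)
    case base
    show ?case
      unfolding transpose_same by (rule id_in_S_sem)
  next
    case (step k)
    show ?case
    proof (cases "k = i")
      case True
      then show ?thesis
        using that(1) step.prems transpose_Suc_in_S_sem by simp
    next
      case False
      then have "transpose (Suc k) k \<circ> transpose k i \<circ> transpose (Suc k) k = transpose (Suc k) i"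
        using step.hyps by (intro transpose_comp_triple) auto
      moreover have "transpose k (Suc k) \<in> S_sem n" "transpose i k \<in> S_sem n"
        using that(1) step transpose_Suc_in_S_sem by auto
      ultimately show ?thesis
        using S_sem_comp by (metis transpose_commute)
    qed
  qed
  then show ?thesis
    using assms by (metis atLeastAtMost_iff nat_le_linear transpose_commute)
qed

lemma permutes_in_S_sem:
  assumes "p permutes {1..n-2}"
  shows "p \<in> S_sem n"
  using assms finite_atLeastAtMost
proof (induction rule: permutes_induct)
  case id
  show ?case
    by (rule id_in_S_sem)
next
  case (swap a b p)
  then show ?case
    by (intro S_sem_comp transpose_in_S_sem) auto
qed

lemma conj_transpose_in_S_sem:
  assumes "i \<in> {1..n-2}" "j \<in> {1..n-2}" "id(a := b) \<in> S_sem n"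
  shows "id(transpose i j a := transpose i j b) \<in> S_sem n"
proof -
  have "transpose i j \<circ> id(a := b) \<circ> transpose i j \<in> S_sem n"
    using assms S_sem_comp transpose_in_S_sem by metis
  then show ?thesis
    by (simp add: comp_upd_comp_inverse)
qed

lemma collapse_in_S_sem:
  assumes i: "i \<in> {1..n-2}" and j: "j < n"
  shows "id(i := j) \<in> S_sem n"
proof -
  have last: "n - 2 \<in> {1..n-2}" and one: "1 \<in> {1..n-2}"
    using n by auto
  consider "j = i" | "j = 0" | "j = n - 1" | "j \<in> {1..n-2}" "j \<noteq> i"
    using j by force
  then show ?thesis
  proof cases
    case 1
    then have "id(i := j) = id"
      by auto
    then show ?thesis
      using id_in_S_sem by simp
  next
    case 2
    show ?thesis
      using conj_transpose_in_S_sem[OF i last letter_d_in_S_sem] 2 i n by (simp add: transpose_def)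
  next
    case 3
    moreover have "transpose i 1 (n - 1) = n - 1"
      using i n by (intro transpose_apply_other) auto
    ultimately show ?thesis
      using conj_transpose_in_S_sem[OF i one letter_f_in_S_sem] by simp
  next
    case 4
    define j' where "j' = transpose i (n - 2) j"
    have "j' \<in> {1..n-2}" "j' \<noteq> n - 2"
      using i 4 by (auto simp: j'_def transpose_def)
    then have "id(n - 2 := j') \<in> S_sem n"
      using conj_transpose_in_S_sem[OF _ one letter_c_in_S_sem, of j'] n by simp
    then show ?thesis
      using conj_transpose_in_S_sem[OF i last, of "n - 2" j'] by (simp add: j'_def)
  qed
qed

lemma fix_0_in_S_sem:
  assumes "t 0 = 0" "\<forall>q. n - 1 \<le> q \<longrightarrow> t q = q" "\<forall>q\<in>{1..n-2}. t q < n"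
  shows "t \<in> S_sem n"
  using assms
proof (induction "defect {1..n-2} t" arbitrary: t rule: less_induct)
  case less
  let ?M = "{1..n-2}"
  have outside: "t x = x" if "x \<notin> ?M" for x
    using that less.prems by (cases "x = 0") auto
  show ?case
  proof (cases "defect ?M t = 0")
    case True
    then show ?thesis
      using outside by (intro permutes_in_S_sem defect_0_imp_permutes) auto
  next
    case False
    then obtain y where y: "y \<in> ?M - t ` ?M"
      unfolding defect_def by (metis card.empty ex_in_conv)
    then obtain i where i: "i \<in> ?M" and less_defect: "defect ?M (t(i := y)) < defect ?M t"
      using defect_fun_upd_less[OF finite_atLeastAtMost y] by blast
    have "t(i := y) \<in> S_sem n"
      using less.prems y i n by (intro less.hyps[OF less_defect]) auto
    moreover have "id(y := t i) \<in> S_sem n"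
      using y i less.prems(3) by (intro collapse_in_S_sem) auto
    moreover have "t x \<noteq> y" for x
      using y outside[of x] by (cases "x \<in> ?M") auto
    then have "t = id(y := t i) \<circ> t(i := y)"
      by (auto simp: fun_eq_iff)
    ultimately show ?thesis
      using S_sem_comp by metis
  qed
qed

lemma ideal_trans_subset_S_sem: "ideal_trans n \<subseteq> S_sem n"
proof
  fix t assume t: "t \<in> ideal_trans n"
  show "t \<in> S_sem n"
  proof (cases "t 0 = 0")
    case True
    then show ?thesis
      using t fix_0_in_S_sem by (simp add: ideal_trans_def)
  next
    case False
    define s where "s x = (if x \<in> {1..n-2} \<and> t x = n - 1 then n - 1 else x)" for x
    have "s \<in> S_sem n"
      using n by (intro fix_0_in_S_sem) (auto simp: s_def)
    moreover have "id(1 := t 0) \<in> S_sem n"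
      using t n by (intro collapse_in_S_sem) (auto simp: ideal_trans_def)
    moreover have "t = id(1 := t 0) \<circ> (\<lambda>q. if q \<le> n - 2 then 1 else q) \<circ> s"
    proof
      fix x
      consider "x = 0" | "x \<in> {1..n-2}" | "n - 1 \<le> x"
        by force
      then show "t x = (id(1 := t 0) \<circ> (\<lambda>q. if q \<le> n - 2 then 1 else q) \<circ> s) x"
        by cases (use t False n in \<open>auto simp: s_def ideal_trans_def\<close>)
    qed
    ultimately show ?thesis
      using S_sem_comp letter_e_in_S_sem by metis
  qed
qed

end

theorem lemma7:
  fixes n :: nat and \<Sigma> :: "'a set" and \<delta> :: "nat \<Rightarrow> 'a \<Rightarrow> nat"
  assumes "n \<ge> 4"
    and "is_dfa n \<Sigma> \<delta>"
    and "minimal_dfa n \<Sigma> \<delta>"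
    and "two_sided_ideal \<Sigma> (lang_from n \<Sigma> \<delta> 0)"
    and "\<forall>xs. set xs \<subseteq> {0..<n} \<and> sorted_wrt (state_prec n \<Sigma> \<delta>) xs \<longrightarrow> length xs \<le> 3"
  shows "card (trans_semigroup n \<Sigma> \<delta>) \<le> n ^ (n - 2) + (n - 2) * 2 ^ (n - 2) + 1
         \<and> trans_semigroup n \<Sigma> \<delta> \<subseteq> S_sem n"
proof -
  interpret ideal_dfa_short_chains n \<Sigma> \<delta>
    using assms(2-5) by unfold_locales
  have sub: "trans_semigroup n \<Sigma> \<delta> \<subseteq> ideal_trans n"
    by (rule trans_semigroup_subset_ideal_trans)
  have "card (trans_semigroup n \<Sigma> \<delta>) \<le> card (ideal_trans n)"
    using card_ideal_trans(1) assms(1) sub by (intro card_mono) auto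
  also have "\<dots> \<le> n ^ (n - 2) + (n - 2) * 2 ^ (n - 2) + 1"
    using card_ideal_trans(2) assms(1) by simp
  finally show ?thesis
    using sub ideal_trans_subset_S_sem[OF assms(1)] by blast
qed

end
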